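(* Let $\lambda\in(0,1)$ and let $G$ be a finite simple connected graph with $n$ vertices. Then $$\frac{\lambda^{n}-\lambda}{\lambda-1}\;\le\; mc^{e}_{\lambda}(G).$$ The lower bound is attained for the path $P_n$, at an end-vertex.
   Context: $d(u,v)$ denotes graph distance and $[u]$ the set of neighbours of $u$. For vertices $k,l$, $s^{kl}$ is the number of shortest $k$–$l$ paths and, for an edge $uv$, $s^{kl}_{uv}$ is the number of those passing through the edge $uv$. The exponential edge betweenness of an edge $uv$ is $b^{e}_{\lambda}(uv)=\sum_{\{k,l\}}\frac{s^{kl}_{uv}}{s^{kl}}\lambda^{d(k,l)}$ over all unordered pairs $\{k,l\}$ of distinct vertices; the exponential betweenness centrality of a vertex $u$ is $c^{e}_{\lambda}(u)=\sum_{v\in[u]}b^{e}_{\lambda}(uv)$; and $mc^{e}_{\lambda}(G)=\min\{c^{e}_{\lambda}(u):u\in V(G)\}$. *)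

theory Defs
  imports Main "HOL-Library.Cardinality" Complex_Main
begin

definition simple_graph :: "'a set \<Rightarrow> ('a \<Rightarrow> 'a \<Rightarrow> bool) \<Rightarrow> bool" where
  "simple_graph V E \<longleftrightarrow> finite V \<and> (\<forall>u v. E u v \<longrightarrow> u \<in> V \<and> v \<in> V)
     \<and> (\<forall>u v. E u v \<longrightarrow> E v u) \<and> (\<forall>u. \<not> E u u)"

definition walk :: "'a set \<Rightarrow> ('a \<Rightarrow> 'a \<Rightarrow> bool) \<Rightarrow> 'a list \<Rightarrow> bool" where
  "walk V E p \<longleftrightarrow> p \<noteq> [] \<and> set p \<subseteq> V \<and> (\<forall>i < length p - 1. E (p ! i) (p ! Suc i))"

definition walks_betw :: "'a set \<Rightarrow> ('a \<Rightarrow> 'a \<Rightarrow> bool) \<Rightarrow> 'a \<Rightarrow> 'a \<Rightarrow> 'a list set" where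
  "walks_betw V E k l = {p. walk V E p \<and> hd p = k \<and> last p = l}"

definition connected_graph :: "'a set \<Rightarrow> ('a \<Rightarrow> 'a \<Rightarrow> bool) \<Rightarrow> bool" where
  "connected_graph V E \<longleftrightarrow> V \<noteq> {} \<and> (\<forall>k\<in>V. \<forall>l\<in>V. walks_betw V E k l \<noteq> {})"

definition gdist :: "'a set \<Rightarrow> ('a \<Rightarrow> 'a \<Rightarrow> bool) \<Rightarrow> 'a \<Rightarrow> 'a \<Rightarrow> nat" where
  "gdist V E k l = (LEAST m. \<exists>p \<in> walks_betw V E k l. length p = Suc m)"

definition shortest_paths :: "'a set \<Rightarrow> ('a \<Rightarrow> 'a \<Rightarrow> bool) \<Rightarrow> 'a \<Rightarrow> 'a \<Rightarrow> 'a list set" where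
  "shortest_paths V E k l = {p \<in> walks_betw V E k l. length p = Suc (gdist V E k l)}"

definition uses_edge :: "'a list \<Rightarrow> 'a \<Rightarrow> 'a \<Rightarrow> bool" where
  "uses_edge p u v \<longleftrightarrow> (\<exists>i < length p - 1.
      (p ! i = u \<and> p ! Suc i = v) \<or> (p ! i = v \<and> p ! Suc i = u))"

definition nsp :: "'a set \<Rightarrow> ('a \<Rightarrow> 'a \<Rightarrow> bool) \<Rightarrow> 'a \<Rightarrow> 'a \<Rightarrow> nat" where
  "nsp V E k l = card (shortest_paths V E k l)"

definition nsp_edge :: "'a set \<Rightarrow> ('a \<Rightarrow> 'a \<Rightarrow> bool) \<Rightarrow> 'a \<Rightarrow> 'a \<Rightarrow> 'a \<Rightarrow> 'a \<Rightarrow> nat" where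
  "nsp_edge V E k l u v = card {p \<in> shortest_paths V E k l. uses_edge p u v}"

text \<open>Exponential edge betweenness: sum over unordered pairs {k,l} of distinct vertices,
  each unordered pair represented once as k < l.\<close>
definition exp_edge_betw :: "'a::linorder set \<Rightarrow> ('a \<Rightarrow> 'a \<Rightarrow> bool) \<Rightarrow> real \<Rightarrow> 'a \<Rightarrow> 'a \<Rightarrow> real" where
  "exp_edge_betw V E lam u v =
     (\<Sum>(k,l) \<in> {(k,l). k \<in> V \<and> l \<in> V \<and> k < l}.
        real (nsp_edge V E k l u v) / real (nsp V E k l) * lam ^ gdist V E k l)"

definition exp_betw_centrality :: "'a::linorder set \<Rightarrow> ('a \<Rightarrow> 'a \<Rightarrow> bool) \<Rightarrow> real \<Rightarrow> 'a \<Rightarrow> real" where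
  "exp_betw_centrality V E lam u = (\<Sum>v \<in> {v \<in> V. E u v}. exp_edge_betw V E lam u v)"

definition min_exp_betw_centrality :: "'a::linorder set \<Rightarrow> ('a \<Rightarrow> 'a \<Rightarrow> bool) \<Rightarrow> real \<Rightarrow> real" where
  "min_exp_betw_centrality V E lam = Min (exp_betw_centrality V E lam ` V)"

definition path_adj :: "nat \<Rightarrow> nat \<Rightarrow> bool" where
  "path_adj i j \<longleftrightarrow> i = Suc j \<or> j = Suc i"

end

theory Submission
  imports Defs
begin

text \<open>Fix a vertex u. For every other vertex l, each shortest u--l path leaves u along an edge
  at u, so the pair {u, l} alone contributes at least \<lambda>^d(u,l) to the centrality of u.
  The distances from u are downward closed (a shortest path passes through every smaller
  distance), so the i-th smallest of the n - 1 distances is at most i, and hence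
  c(u) \<ge> \<lambda> + ... + \<lambda>^(n-1). At the end vertex 0 of the path P_n only the pairs {0, l}
  use the edge 01, each with weight at most \<lambda>^l, so the bound is attained.\<close>


lemma walk_single [simp]: "walk V E [x] \<longleftrightarrow> x \<in> V"
  by (auto simp: walk_def)

lemma walk_Cons_Cons [simp]: "walk V E (x # y # xs) \<longleftrightarrow> x \<in> V \<and> E x y \<and> walk V E (y # xs)"
  unfolding walk_def by (auto simp: All_less_Suc2)

lemma walk_append_tl:
  assumes "walk V E p" "walk V E q" "last p = hd q"
  shows "walk V E (p @ tl q)"
  using assms
proof (induction p)
  case Nil
  then show ?case by (simp add: walk_def)
next
  case (Cons x xs)
  then show ?case by (cases xs; cases q) auto
qed

lemma walk_take: "walk V E p \<Longrightarrow> 0 < m \<Longrightarrow> walk V E (take m p)"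
  unfolding walk_def by (auto dest: in_set_takeD)

lemma walk_drop: "walk V E p \<Longrightarrow> m < length p \<Longrightarrow> walk V E (drop m p)"
  unfolding walk_def by (auto dest: in_set_dropD simp: add.commute[of m])

lemma walk_rev:
  assumes "symp E" and "walk V E p"
  shows "walk V E (rev p)"
  unfolding walk_def
proof (intro conjI allI impI)
  show "rev p \<noteq> []" "set (rev p) \<subseteq> V" using assms(2) by (auto simp: walk_def)
  fix i assume i: "i < length (rev p) - 1"
  define j where "j = length p - 2 - i"
  have "E (p ! j) (p ! Suc j)" using assms(2) i by (auto simp: walk_def j_def)
  moreover have "rev p ! i = p ! Suc j" "rev p ! Suc i = p ! j"
    using i by (auto simp: rev_nth j_def Suc_diff_Suc numeral_2_eq_2)
  ultimately show "E (rev p ! i) (rev p ! Suc i)" using assms(1) by (auto dest: sympD)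
qed

lemma walks_betw_rev:
  "symp E \<Longrightarrow> p \<in> walks_betw V E k l \<Longrightarrow> rev p \<in> walks_betw V E l k"
  by (auto simp: walks_betw_def walk_rev hd_rev last_rev)

lemma walks_betw_length_ge_2: "p \<in> walks_betw V E k l \<Longrightarrow> k \<noteq> l \<Longrightarrow> 2 \<le> length p"
  unfolding walks_betw_def walk_def by (cases p; cases "tl p") auto

lemma walks_betw_uses_edge_at_ends:
  assumes p: "p \<in> walks_betw V E k l" and "k \<noteq> l" and u: "u = k \<or> u = l" and "symp E"
  shows "\<exists>v \<in> V. E u v \<and> uses_edge p u v"
proof -
  have w: "walk V E p" "p ! 0 = k" "p ! (length p - 1) = l" and len: "2 \<le> length p"
    using p walks_betw_length_ge_2[OF p \<open>k \<noteq> l\<close>]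
    by (auto simp: walks_betw_def walk_def hd_conv_nth last_conv_nth)
  show ?thesis
  proof (cases "u = k")
    case True
    have "E (p ! 0) (p ! 1)" "p ! 1 \<in> V" using w len by (auto simp: walk_def)
    moreover have "uses_edge p (p ! 0) (p ! 1)"
      unfolding uses_edge_def using len by (intro exI[of _ 0]) auto
    ultimately show ?thesis using True w by auto
  next
    case False
    define i where "i = length p - 2"
    have i: "i < length p - 1" "Suc i = length p - 1" using len by (auto simp: i_def)
    have "E (p ! i) (p ! Suc i)" "p ! i \<in> V" using w(1) i(1) by (auto simp: walk_def)
    moreover have "uses_edge p (p ! Suc i) (p ! i)"
      unfolding uses_edge_def using i by (intro exI[of _ i]) auto
    ultimately show ?thesis using False u w i \<open>symp E\<close> by (auto dest: sympD)
  qed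
qed

lemma shortest_paths_nonempty:
  assumes "walks_betw V E k l \<noteq> {}"
  shows "shortest_paths V E k l \<noteq> {}"
proof -
  obtain p where p: "p \<in> walks_betw V E k l" using assms by auto
  then have "length p = Suc (length p - 1)" by (cases p) (auto simp: walks_betw_def walk_def)
  with p have "\<exists>m. \<exists>p \<in> walks_betw V E k l. length p = Suc m" by blast
  then have "\<exists>p \<in> walks_betw V E k l. length p = Suc (gdist V E k l)"
    unfolding gdist_def by (rule LeastI_ex)
  then show ?thesis by (auto simp: shortest_paths_def)
qed

lemma gdist_le_length:
  assumes p: "p \<in> walks_betw V E k l"
  shows "gdist V E k l \<le> length p - 1"
proof -
  have "length p = Suc (length p - 1)" using p by (cases p) (auto simp: walks_betw_def walk_def)
  then show ?thesis unfolding gdist_def by (intro Least_le) (use p in metis)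
qed

lemma gdist_self: "k \<in> V \<Longrightarrow> gdist V E k k = 0"
  using gdist_le_length[of "[k]" V E k k] by (simp add: walks_betw_def)

lemma gdist_sym:
  assumes "symp E"
  shows "gdist V E k l = gdist V E l k"
proof -
  have "(\<exists>p \<in> walks_betw V E k l. length p = m) \<longleftrightarrow> (\<exists>p \<in> walks_betw V E l k. length p = m)"
    for m
    using walks_betw_rev[OF assms] by (metis length_rev)
  then show ?thesis unfolding gdist_def by simp
qed

lemma finite_shortest_paths: "finite V \<Longrightarrow> finite (shortest_paths V E k l)"
  by (rule finite_subset[OF _ finite_lists_length_eq[of V "Suc (gdist V E k l)"]])
     (auto simp: shortest_paths_def walks_betw_def walk_def)

lemma shortest_pathsD:
  assumes "p \<in> shortest_paths V E k l"
  shows "walk V E p" "length p = Suc (gdist V E k l)" "p ! 0 = k" "p ! gdist V E k l = l"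
proof -
  have "p \<noteq> []" "hd p = k" "last p = l" "walk V E p" "length p = Suc (gdist V E k l)"
    using assms by (auto simp: shortest_paths_def walks_betw_def walk_def)
  then show "walk V E p" "length p = Suc (gdist V E k l)" "p ! 0 = k" "p ! gdist V E k l = l"
    by (auto simp: hd_conv_nth last_conv_nth)
qed

lemma nsp_pos: "finite V \<Longrightarrow> walks_betw V E k l \<noteq> {} \<Longrightarrow> 0 < nsp V E k l"
  by (simp add: nsp_def card_gt_0_iff finite_shortest_paths shortest_paths_nonempty)

lemma walks_betw_append_tl:
  assumes "p \<in> walks_betw V E k x" "q \<in> walks_betw V E x l"
  shows "p @ tl q \<in> walks_betw V E k l"
proof -
  have q: "walk V E q" "hd q = x" "last q = l" "q \<noteq> []"
    using assms(2) by (auto simp: walks_betw_def walk_def)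
  have "last (p @ tl q) = l"
    using assms(1) q by (cases q) (auto simp: walks_betw_def)
  moreover have "walk V E (p @ tl q)" using assms by (intro walk_append_tl) (auto simp: walks_betw_def)
  ultimately show ?thesis using assms(1) by (auto simp: walks_betw_def walk_def)
qed

lemma walks_betw_take:
  assumes "p \<in> walks_betw V E k l" "m < length p"
  shows "take (Suc m) p \<in> walks_betw V E k (p ! m)"
proof -
  have "last (take (Suc m) p) = p ! m" using assms(2) by (simp add: take_Suc_conv_app_nth)
  then show ?thesis using assms by (auto simp: walks_betw_def walk_take hd_take)
qed

lemma walks_betw_drop:
  "p \<in> walks_betw V E k l \<Longrightarrow> m < length p \<Longrightarrow> drop m p \<in> walks_betw V E (p ! m) l"
  by (auto simp: walks_betw_def walk_drop hd_drop_conv_nth)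

lemma gdist_triangle:
  assumes "walks_betw V E k x \<noteq> {}" "walks_betw V E x l \<noteq> {}"
  shows "gdist V E k l \<le> gdist V E k x + gdist V E x l"
proof -
  obtain p q where "p \<in> shortest_paths V E k x" "q \<in> shortest_paths V E x l"
    using assms shortest_paths_nonempty by (metis all_not_in_conv)
  then have "p @ tl q \<in> walks_betw V E k l"
    and "length (p @ tl q) = Suc (gdist V E k x + gdist V E x l)"
    by (auto simp: shortest_paths_def walks_betw_append_tl)
  then show ?thesis using gdist_le_length by fastforce
qed

lemma gdist_shortest_path_nth:
  assumes p: "p \<in> shortest_paths V E k l" and m: "m \<le> gdist V E k l"
  shows "gdist V E k (p ! m) = m"
proof -
  have w: "p \<in> walks_betw V E k l" and len: "length p = Suc (gdist V E k l)"
    using p by (auto simp: shortest_paths_def)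
  have "m < length p" using len m by simp
  note pre = walks_betw_take[OF w this] and suf = walks_betw_drop[OF w this]
  have "gdist V E k (p ! m) \<le> m" using gdist_le_length[OF pre] \<open>m < length p\<close> by simp
  moreover have "gdist V E (p ! m) l \<le> gdist V E k l - m" using gdist_le_length[OF suf] len by simp
  moreover have "gdist V E k l \<le> gdist V E k (p ! m) + gdist V E (p ! m) l"
    using pre suf by (intro gdist_triangle) auto
  ultimately show ?thesis using m by linarith
qed

lemma gdist_intermediate_value:
  assumes "walks_betw V E u s \<noteq> {}" and "m \<le> gdist V E u s"
  shows "\<exists>t \<in> V. gdist V E u t = m"
proof -
  obtain p where p: "p \<in> shortest_paths V E u s" using shortest_paths_nonempty[OF assms(1)] by blast
  then have "p ! m \<in> V" using assms(2)
    by (auto simp: shortest_paths_def walks_betw_def walk_def dest!: nth_mem[of m p])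
  then show ?thesis using gdist_shortest_path_nth[OF p assms(2)] by blast
qed

lemma nsp_edge_le_nsp: "finite V \<Longrightarrow> nsp_edge V E k l u v \<le> nsp V E k l"
  unfolding nsp_edge_def nsp_def by (rule card_mono[OF finite_shortest_paths]) auto

lemma nsp_le_sum_nsp_edge:
  assumes "finite V" "symp E" "k \<noteq> l" "u = k \<or> u = l"
  shows "nsp V E k l \<le> (\<Sum>v \<in> {v \<in> V. E u v}. nsp_edge V E k l u v)"
proof -
  let ?SP = "shortest_paths V E k l" and ?N = "{v \<in> V. E u v}"
  have "?SP \<subseteq> (\<Union>v \<in> ?N. {p \<in> ?SP. uses_edge p u v})"
    using walks_betw_uses_edge_at_ends[OF _ assms(3,4,2)] by (fastforce simp: shortest_paths_def)
  then have "card ?SP \<le> card (\<Union>v \<in> ?N. {p \<in> ?SP. uses_edge p u v})"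
    using assms(1) by (intro card_mono) (auto simp: finite_shortest_paths)
  also have "\<dots> \<le> (\<Sum>v \<in> ?N. card {p \<in> ?SP. uses_edge p u v})"
    using assms(1) by (intro card_UN_le) simp
  finally show ?thesis by (simp add: nsp_def nsp_edge_def)
qed

lemma sum_ordered_pairs_through:
  fixes u :: "'a::linorder"
  assumes "u \<in> V" and sym: "\<And>k l. f k l = f l k"
  shows "(\<Sum>(k, l) \<in> {(k, l). k \<in> V \<and> l \<in> V \<and> k < l \<and> (k = u \<or> l = u)}. f k l)
    = (\<Sum>l \<in> V - {u}. f u l)"
proof -
  let ?pair = "\<lambda>l. (min u l, max u l)"
  have "{(k, l). k \<in> V \<and> l \<in> V \<and> k < l \<and> (k = u \<or> l = u)} \<subseteq> ?pair ` (V - {u})"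
  proof (rule subsetI, clarify)
    fix k l assume "k \<in> V" "l \<in> V" "k < l" "k = u \<or> l = u"
    then show "(k, l) \<in> ?pair ` (V - {u})"
      by (intro image_eqI[where x = "if k = u then l else k"]) (auto simp: min_def max_def)
  qed
  moreover have "?pair ` (V - {u}) \<subseteq> {(k, l). k \<in> V \<and> l \<in> V \<and> k < l \<and> (k = u \<or> l = u)}"
    using assms(1) by (auto simp: min_def max_def split: if_splits)
  ultimately have "{(k, l). k \<in> V \<and> l \<in> V \<and> k < l \<and> (k = u \<or> l = u)} = ?pair ` (V - {u})"
    by (rule antisym)
  moreover have "inj_on ?pair (V - {u})"
    by (auto simp: inj_on_def min_def max_def split: if_splits)
  moreover have "f (min u l) (max u l) = f u l" for l
    using sym by (cases "u \<le> l") (auto simp: min_def max_def)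
  ultimately show ?thesis by (simp add: sum.reindex)
qed

lemma exp_betw_centrality_ge_sum_gdist:
  fixes lam :: real
  assumes "0 \<le> lam" "finite V" "symp E" "connected_graph V E" "u \<in> V"
  shows "(\<Sum>l \<in> V - {u}. lam ^ gdist V E u l) \<le> exp_betw_centrality V E lam u"
proof -
  let ?P = "{(k, l). k \<in> V \<and> l \<in> V \<and> k < l}" and ?N = "{v \<in> V. E u v}"
  let ?Pu = "{(k, l). k \<in> V \<and> l \<in> V \<and> k < l \<and> (k = u \<or> l = u)}"
  define F where "F k l v = real (nsp_edge V E k l u v) / real (nsp V E k l) * lam ^ gdist V E k l"
    for k l v
  have finP: "finite ?P" by (rule finite_subset[of _ "V \<times> V"]) (auto simp: assms(2))
  have pair_bound: "lam ^ gdist V E k l \<le> (\<Sum>v \<in> ?N. F k l v)"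
    if "k \<in> V" "l \<in> V" "k \<noteq> l" "k = u \<or> l = u" for k l
  proof -
    have "0 < real (nsp V E k l)"
      using nsp_pos[OF assms(2)] assms(4) that(1,2) by (simp add: connected_graph_def)
    moreover have "real (nsp V E k l) \<le> (\<Sum>v \<in> ?N. real (nsp_edge V E k l u v))"
      using nsp_le_sum_nsp_edge[OF assms(2,3) that(3)] that(4) by (metis of_nat_le_iff of_nat_sum)
    ultimately have "1 \<le> (\<Sum>v \<in> ?N. real (nsp_edge V E k l u v)) / real (nsp V E k l)" by simp
    then have "lam ^ gdist V E k l * 1
      \<le> lam ^ gdist V E k l * ((\<Sum>v \<in> ?N. real (nsp_edge V E k l u v)) / real (nsp V E k l))"
      using assms(1) by (intro mult_left_mono) auto
    then show ?thesis by (simp add: F_def sum_distrib_left sum_divide_distrib mult.commute)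
  qed
  have "(\<Sum>l \<in> V - {u}. lam ^ gdist V E u l) = (\<Sum>(k, l) \<in> ?Pu. lam ^ gdist V E k l)"
    using sum_ordered_pairs_through[OF assms(5), of "\<lambda>k l. lam ^ gdist V E k l"]
      gdist_sym[OF assms(3)] by simp
  also have "\<dots> \<le> (\<Sum>(k, l) \<in> ?Pu. \<Sum>v \<in> ?N. F k l v)"
    using pair_bound by (intro sum_mono) auto
  also have "\<dots> \<le> (\<Sum>(k, l) \<in> ?P. \<Sum>v \<in> ?N. F k l v)"
    using assms(1) by (intro sum_mono2[OF finP]) (auto simp: F_def intro!: sum_nonneg)
  also have "\<dots> = exp_betw_centrality V E lam u"
    unfolding exp_betw_centrality_def exp_edge_betw_def F_def
    by (subst sum.swap) (simp add: case_prod_beta)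
  finally show ?thesis .
qed

lemma sum_power_le_sum_power_of_levels:
  fixes x :: real
  assumes "finite S" "0 \<le> x" "x \<le> 1"
    and "\<And>s m. s \<in> S \<Longrightarrow> 1 \<le> m \<Longrightarrow> m \<le> f s \<Longrightarrow> m \<in> f ` S"
  shows "(\<Sum>i = 1..card S. x ^ i) \<le> (\<Sum>s \<in> S. x ^ f s)"
  using assms
proof (induction S rule: finite_remove_induct)
  case empty
  then show ?case by simp
next
  case (remove S)
  have "Max (f ` S) \<in> f ` S" using remove.hyps(1,2) by (intro Max_in) auto
  then obtain s where s: "s \<in> S" "f s = Max (f ` S)" by auto
  have top: "f t \<le> f s" if "t \<in> S" for t using s remove.hyps(1) that by simp
  have "{1..f s} \<subseteq> f ` S" using remove.prems(3)[OF s(1)] by auto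
  then have "card {1..f s} \<le> card (f ` S)" using remove.hyps(1) by (intro card_mono) auto
  also have "\<dots> \<le> card S" using remove.hyps(1) by (rule card_image_le)
  finally have "f s \<le> card S" by simp
  have levels: "m \<in> f ` (S - {s})" if t: "t \<in> S - {s}" "1 \<le> m" "m \<le> f t" for t m
  proof -
    obtain t' where "t' \<in> S" "f t' = m" using remove.prems(3) t by blast
    then show ?thesis using t top[of t] by (cases "t' = s") (auto intro: rev_image_eqI)
  qed
  have "card S = Suc (card (S - {s}))" using card_Suc_Diff1[OF remove.hyps(1) s(1)] by simp
  then have "(\<Sum>i = 1..card S. x ^ i) = (\<Sum>i = 1..card (S - {s}). x ^ i) + x ^ card S" by simp
  also have "\<dots> \<le> (\<Sum>t \<in> S - {s}. x ^ f t) + x ^ f s"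
    using remove.IH[OF s(1) remove.prems(1,2) levels]
      power_decreasing[OF \<open>f s \<le> card S\<close> remove.prems(1,2)]
    by (rule add_mono)
  also have "\<dots> = (\<Sum>t \<in> S. x ^ f t)"
    using sum.remove[OF remove.hyps(1) s(1), of "\<lambda>t. x ^ f t"] by simp
  finally show ?case .
qed

lemma exp_betw_centrality_ge:
  fixes lam :: real
  assumes "0 \<le> lam" "lam \<le> 1" "finite V" "symp E" "connected_graph V E" "u \<in> V"
  shows "(\<Sum>i = 1..card V - 1. lam ^ i) \<le> exp_betw_centrality V E lam u"
proof -
  have walks: "walks_betw V E u s \<noteq> {}" if "s \<in> V" for s
    using assms(5,6) that by (simp add: connected_graph_def)
  have "(\<Sum>i = 1..card (V - {u}). lam ^ i) \<le> (\<Sum>l \<in> V - {u}. lam ^ gdist V E u l)"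
  proof (rule sum_power_le_sum_power_of_levels)
    fix s m assume "s \<in> V - {u}" "1 \<le> m" "m \<le> gdist V E u s"
    then obtain t where "t \<in> V" "gdist V E u t = m"
      using gdist_intermediate_value[OF walks] by blast
    then show "m \<in> gdist V E u ` (V - {u})" using \<open>1 \<le> m\<close> gdist_self[OF assms(6)] by force
  qed (use assms in auto)
  also have "\<dots> \<le> exp_betw_centrality V E lam u"
    using exp_betw_centrality_ge_sum_gdist assms by blast
  finally show ?thesis using assms(3,6) by simp
qed

lemma sum_power_from_1:
  fixes x :: real
  assumes "x \<noteq> 1" "1 \<le> n"
  shows "(\<Sum>i = 1..n - 1. x ^ i) = (x ^ n - x) / (x - 1)"
  using assms by (cases n) (auto simp: sum_gp field_simps)

lemma min_exp_betw_centrality_ge: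
  fixes lam :: real
  assumes "0 \<le> lam" "lam < 1" "finite V" "symp E" "connected_graph V E"
  shows "(lam ^ card V - lam) / (lam - 1) \<le> min_exp_betw_centrality V E lam"
proof -
  have "V \<noteq> {}" using assms(5) by (simp add: connected_graph_def)
  then have "1 \<le> card V" using assms(3) by (simp add: Suc_le_eq card_gt_0_iff)
  then have "(lam ^ card V - lam) / (lam - 1) = (\<Sum>i = 1..card V - 1. lam ^ i)"
    using assms(2) by (intro sum_power_from_1[symmetric]) auto
  then show ?thesis
    using exp_betw_centrality_ge[OF assms(1) _ assms(3-5)] assms(2,3) \<open>V \<noteq> {}\<close>
    by (simp add: min_exp_betw_centrality_def)
qed

lemma symp_path_adj: "symp path_adj"
  by (auto intro: sympI simp: path_adj_def)

lemma walks_betw_path_upt: "k \<le> l \<Longrightarrow> l < n \<Longrightarrow> [k..<Suc l] \<in> walks_betw {0..<n} path_adj k l"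
  by (auto simp: walks_betw_def walk_def path_adj_def nth_upt hd_upt simp del: upt_Suc)

lemma connected_path: "1 \<le> n \<Longrightarrow> connected_graph {0..<n} path_adj"
  unfolding connected_graph_def
proof (intro conjI ballI)
  fix k l assume "k \<in> {0..<n}" "l \<in> {0..<n}"
  then show "walks_betw {0..<n} path_adj k l \<noteq> {}"
    using walks_betw_path_upt[of k l n] walks_betw_path_upt[of l k n]
      walks_betw_rev[OF symp_path_adj, of _ "{0..<n}" l k]
    by (cases "k \<le> l") fastforce+
qed auto

lemma walk_path_adj_nth_le:
  assumes "walk V path_adj p" "i \<le> j" "j < length p"
  shows "p ! j \<le> p ! i + (j - i) \<and> p ! i \<le> p ! j + (j - i)"
  using assms(2,3)
proof (induction j rule: dec_induct)
  case base
  then show ?case by simp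
next
  case (step j)
  have "path_adj (p ! j) (p ! Suc j)" using assms(1) step.prems by (auto simp: walk_def)
  then show ?case using step by (auto simp: path_adj_def)
qed

lemma gdist_path:
  assumes "k \<le> l" "l < n"
  shows "gdist {0..<n} path_adj k l = l - k"
proof (rule antisym)
  show "gdist {0..<n} path_adj k l \<le> l - k"
    using gdist_le_length[OF walks_betw_path_upt[OF assms]] assms by simp
  have "shortest_paths {0..<n} path_adj k l \<noteq> {}"
    using walks_betw_path_upt[OF assms] by (intro shortest_paths_nonempty) blast
  then obtain p where "p \<in> shortest_paths {0..<n} path_adj k l" by blast
  note p = shortest_pathsD[OF this]
  show "l - k \<le> gdist {0..<n} path_adj k l"
    using walk_path_adj_nth_le[OF p(1), of 0 "gdist {0..<n} path_adj k l"] p by (simp add: le_diff_conv)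
qed

lemma nsp_edge_path_0_1:
  assumes "1 \<le> k" "k < l" "l < n"
  shows "nsp_edge {0..<n} path_adj k l 0 1 = 0"
proof -
  have "\<not> uses_edge p 0 1" if "p \<in> shortest_paths {0..<n} path_adj k l" for p
  proof
    note p = shortest_pathsD[OF that]
    assume "uses_edge p 0 1"
    then obtain j where j: "j < length p" "p ! j = 0"
      unfolding uses_edge_def by (metis Suc_lessI less_diff_conv add_lessD1 Suc_eq_plus1)
    let ?d = "gdist {0..<n} path_adj k l"
    have "k \<le> j" using walk_path_adj_nth_le[OF p(1), of 0 j] j p by simp
    moreover have "l \<le> ?d - j" using walk_path_adj_nth_le[OF p(1), of j ?d] j p by simp
    moreover have "?d = l - k" using gdist_path assms by simp
    ultimately show False using assms by simp
  qed
  then have "{p \<in> shortest_paths {0..<n} path_adj k l. uses_edge p 0 1} = {}" by blast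
  then show ?thesis by (metis card.empty nsp_edge_def)
qed

lemma exp_betw_centrality_path_0_le:
  fixes lam :: real
  assumes "0 \<le> lam" "1 \<le> n"
  shows "exp_betw_centrality {0..<n} path_adj lam 0 \<le> (\<Sum>i = 1..n - 1. lam ^ i)"
proof (cases "n = 1")
  case True
  then have "{v \<in> {0..<n}. path_adj 0 v} = {}" by (auto simp: path_adj_def)
  then have "exp_betw_centrality {0..<n} path_adj lam 0 = 0"
    unfolding exp_betw_centrality_def by (simp only: sum.empty)
  then show ?thesis using True by simp
next
  case False
  let ?V = "{0..<n}"
  let ?P = "{(k, l). k \<in> ?V \<and> l \<in> ?V \<and> k < l}"
  let ?Q = "{(k, l). k \<in> ?V \<and> l \<in> ?V \<and> k < l \<and> (k = 0 \<or> l = 0)}"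
  define F where "F k l = real (nsp_edge ?V path_adj k l 0 1) / real (nsp ?V path_adj k l)
    * lam ^ gdist ?V path_adj k l" for k l
  have "{v \<in> ?V. path_adj 0 v} = {1}" using False assms(2) by (auto simp: path_adj_def)
  then have "exp_betw_centrality ?V path_adj lam 0 = (\<Sum>(k, l) \<in> ?P. F k l)"
    by (simp add: exp_betw_centrality_def exp_edge_betw_def F_def)
  also have "\<dots> = (\<Sum>(k, l) \<in> ?Q. F k l)"
  proof (rule sum.mono_neutral_right)
    show "finite ?P" by (rule finite_subset[of _ "?V \<times> ?V"]) auto
    show "\<forall>x \<in> ?P - ?Q. (case x of (k, l) \<Rightarrow> F k l) = 0"
      using nsp_edge_path_0_1[of _ _ n] by (fastforce simp: F_def Suc_le_eq)
  qed auto
  also have "\<dots> \<le> (\<Sum>(k, l) \<in> ?Q. lam ^ gdist ?V path_adj k l)"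
  proof (intro sum_mono, clarify)
    fix k l
    have "real (nsp_edge ?V path_adj k l 0 1) / real (nsp ?V path_adj k l) \<le> 1"
      using nsp_edge_le_nsp[of ?V path_adj k l 0 1]
      by (cases "nsp ?V path_adj k l = 0") (auto simp: divide_le_eq_1)
    then show "F k l \<le> lam ^ gdist ?V path_adj k l"
      unfolding F_def using assms(1) by (intro mult_left_le_one_le) auto
  qed
  also have "\<dots> = (\<Sum>l \<in> ?V - {0}. lam ^ gdist ?V path_adj 0 l)"
    using sum_ordered_pairs_through[of 0 ?V "\<lambda>k l. lam ^ gdist ?V path_adj k l"]
      gdist_sym[OF symp_path_adj] assms(2) by simp
  also have "\<dots> = (\<Sum>l = 1..n - 1. lam ^ l)"
    using assms(2) by (intro sum.cong) (auto simp: gdist_path)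
  finally show ?thesis .
qed

lemma exp_betw_centrality_path_0:
  fixes lam :: real
  assumes "0 \<le> lam" "lam < 1" "1 \<le> n"
  shows "exp_betw_centrality {0..<n} path_adj lam 0 = (lam ^ n - lam) / (lam - 1)"
proof -
  have "(\<Sum>i = 1..n - 1. lam ^ i) \<le> exp_betw_centrality {0..<n} path_adj lam 0"
    using exp_betw_centrality_ge[OF assms(1) _ _ symp_path_adj connected_path] assms by simp
  then show ?thesis
    using exp_betw_centrality_path_0_le[OF assms(1,3)] sum_power_from_1[of lam n] assms(2,3) by simp
qed

theorem theorem6:
  fixes lam :: real and V :: "'a::linorder set" and E :: "'a \<Rightarrow> 'a \<Rightarrow> bool"
  assumes "0 < lam" and "lam < 1"
    and "simple_graph V E" and "connected_graph V E"
  shows "(lam ^ card V - lam) / (lam - 1) \<le> min_exp_betw_centrality V E lam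
    \<and> (\<forall>n::nat. n \<ge> 1 \<longrightarrow>
          exp_betw_centrality {0..<n} path_adj lam 0 = (lam ^ n - lam) / (lam - 1)
        \<and> min_exp_betw_centrality {0..<n} path_adj lam = (lam ^ n - lam) / (lam - 1))"
proof (intro conjI allI impI)
  have "finite V" "symp E" using assms(3) by (auto simp: simple_graph_def intro: sympI)
  then show "(lam ^ card V - lam) / (lam - 1) \<le> min_exp_betw_centrality V E lam"
    using assms(1,2,4) by (intro min_exp_betw_centrality_ge) auto
next
  fix n :: nat assume n: "n \<ge> 1"
  show c0: "exp_betw_centrality {0..<n} path_adj lam 0 = (lam ^ n - lam) / (lam - 1)"
    using exp_betw_centrality_path_0 assms(1,2) n by simp
  have "min_exp_betw_centrality {0..<n} path_adj lam \<le> exp_betw_centrality {0..<n} path_adj lam 0"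
    unfolding min_exp_betw_centrality_def using n by (intro Min_le) auto
  moreover have "(lam ^ n - lam) / (lam - 1) \<le> min_exp_betw_centrality {0..<n} path_adj lam"
    using min_exp_betw_centrality_ge[OF _ assms(2) _ symp_path_adj connected_path[OF n]] assms(1)
    by simp
  ultimately show "min_exp_betw_centrality {0..<n} path_adj lam = (lam ^ n - lam) / (lam - 1)"
    using c0 by linarith
qed

end
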